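(* Let $a,b,c$ be integers with $a,b,c>1$ and let $$M=\begin{pmatrix} a & b\\ c & 1\end{pmatrix}.$$ Then $\mathrm{Cat}(M)\neq\emptyset$ if and only if $a-bc>0$.
   Context: For an $n\times n$ matrix $M=(m_{ij})$ with entries in the natural numbers, $\mathrm{Cat}(M)$ denotes the collection of categories $A$ with exactly $n$ distinct objects $x_1,\dots,x_n$ such that $|A(x_i,x_j)|=m_{ij}$ for all $i,j$, where $A(x_i,x_j)$ is the set of morphisms from $x_i$ to $x_j$. One says $M$ "works" if $\mathrm{Cat}(M)\neq\emptyset$. *)

theory Defs
  imports Main
begin

(* A category with objects x_0,...,x_{n-1} (indices 0..<n) whose hom-set A(x_i,x_j)
   has exactly m i j elements is, up to relabelling morphisms, given by taking
   A(x_i,x_j) = {0..<m i j} together with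
     comp i j k g f   (= g o f  for f : x_i -> x_j, g : x_j -> x_k)
     idn i            (identity of x_i). *)

type_synonym cat_data = "(nat \<Rightarrow> nat \<Rightarrow> nat \<Rightarrow> nat \<Rightarrow> nat \<Rightarrow> nat) \<times> (nat \<Rightarrow> nat)"

definition Cat :: "nat \<Rightarrow> (nat \<Rightarrow> nat \<Rightarrow> nat) \<Rightarrow> cat_data set" where
  "Cat n m = {(comp, idn).
     (\<forall>i<n. idn i < m i i) \<and>
     (\<forall>i<n. \<forall>j<n. \<forall>k<n. \<forall>f<m i j. \<forall>g<m j k. comp i j k g f < m i k) \<and>
     (\<forall>i<n. \<forall>j<n. \<forall>f<m i j. comp i j j (idn j) f = f \<and> comp i i j f (idn i) = f) \<and>
     (\<forall>i<n. \<forall>j<n. \<forall>k<n. \<forall>l<n. \<forall>f<m i j. \<forall>g<m j k. \<forall>h<m k l.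
        comp i k l h (comp i j k g f) = comp i j l (comp j k l h g) f)}"

definition works :: "nat \<Rightarrow> (nat \<Rightarrow> nat \<Rightarrow> nat) \<Rightarrow> bool" where
  "works n m \<longleftrightarrow> Cat n m \<noteq> {}"

definition mat2 :: "nat \<Rightarrow> nat \<Rightarrow> nat \<Rightarrow> nat \<Rightarrow> (nat \<Rightarrow> nat \<Rightarrow> nat)" where
  "mat2 a b c d = (\<lambda>i j. if i = 0 then (if j = 0 then a else b) else (if j = 0 then c else d))"

end

theory Submission
  imports Defs
begin

text \<open>If \<open>y\<close> has no endomorphism besides its identity, then \<open>f \<circ> g = id\<^sub>y\<close>
  for all \<open>f : x \<rightarrow> y\<close>, \<open>g : y \<rightarrow> x\<close>, so \<open>f\<close> and \<open>g\<close> are recovered from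
  \<open>g \<circ> f\<close> as \<open>f \<circ> (g \<circ> f)\<close> and \<open>(g \<circ> f) \<circ> g\<close>, and \<open>g \<circ> f = id\<^sub>x\<close> would force
  all morphisms \<open>x \<rightarrow> y\<close> to coincide. So \<open>(f, g) \<mapsto> g \<circ> f\<close> embeds
  \<open>A(x,y) \<times> A(y,x)\<close> into \<open>A(x,x) - {id\<^sub>x}\<close>, giving \<open>bc < a\<close>. Conversely, if
  \<open>bc < a\<close>, let \<open>A(x,x)\<close> consist of \<open>id\<^sub>x\<close>, the \<open>bc\<close> formal composites \<open>g \<circ> f\<close>,
  and surplus elements each acting as some composite; the only nontrivial rule is
  \<open>(g' \<circ> f') \<circ> (g \<circ> f) = g' \<circ> f\<close>.\<close>

lemma Cat_mult_hom_less_end: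
  assumes C: "(cm, idn) \<in> Cat n m"
    and i: "i < n" and j: "j < n"
    and end_j: "m j j = 1" and two_ij: "1 < m i j"
  shows "m i j * m j i < m i i"
proof -
  have idn: "\<And>k. k < n \<Longrightarrow> idn k < m k k"
    and closed: "\<And>k l p f g. \<lbrakk>k < n; l < n; p < n; f < m k l; g < m l p\<rbrakk>
                   \<Longrightarrow> cm k l p g f < m k p"
    and unit: "\<And>k l f. \<lbrakk>k < n; l < n; f < m k l\<rbrakk>
                   \<Longrightarrow> cm k l l (idn l) f = f \<and> cm k k l f (idn k) = f"
    and assoc: "\<And>k l p q f g h. \<lbrakk>k < n; l < n; p < n; q < n; f < m k l; g < m l p; h < m p q\<rbrakk>
                   \<Longrightarrow> cm k p q h (cm k l p g f) = cm k l q (cm l p q h g) f"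
    using C unfolding Cat_def by auto
  have through_j: "cm j i j f g = idn j" if "f < m i j" "g < m j i" for f g
    using closed[OF j i j that(2) that(1)] idn[OF j] end_j by simp
  have left_cancel: "cm i i j f' (cm i j i g f) = f"
    if "f < m i j" "g < m j i" "f' < m i j" for f g f'
    using assoc[OF i j i j that] through_j[OF that(3,2)] unit[OF i j that(1)] by simp
  have right_cancel: "cm j i i (cm i j i g f) g' = g"
    if "f < m i j" "g < m j i" "g' < m j i" for f g g'
    using assoc[OF j i j i that(3,1,2)] through_j[OF that(1,3)] unit[OF j i that(2)] by simp
  let ?phi = "\<lambda>(f, g). cm i j i g f"
  let ?pairs = "{..<m i j} \<times> {..<m j i}"
  have "inj_on ?phi ?pairs"
  proof (rule inj_onI)
    fix x y assume "x \<in> ?pairs" "y \<in> ?pairs" and eq: "?phi x = ?phi y"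
    then obtain f g f2 g2 where "x = (f, g)" "y = (f2, g2)"
      and "f < m i j" "g < m j i" "f2 < m i j" "g2 < m j i" by auto
    then show "x = y"
      using eq left_cancel[of f g f] left_cancel[of f2 g2 f]
        right_cancel[of f g g] right_cancel[of f2 g2 g] by simp
  qed
  moreover have "?phi ` ?pairs \<subseteq> {..<m i i} - {idn i}"
  proof
    fix h assume "h \<in> ?phi ` ?pairs"
    then obtain f g where f: "f < m i j" and g: "g < m j i" and h: "h = cm i j i g f" by auto
    have "h \<noteq> idn i"
    proof
      assume "h = idn i"
      then have "f' = f" if "f' < m i j" for f'
        using left_cancel[OF f g that] unit[OF i j that] h by simp
      from this[of 0] this[of 1] two_ij show False by simp
    qed
    then show "h \<in> {..<m i i} - {idn i}" using closed[OF i j i f g] h by simp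
  qed
  ultimately have "m i j * m j i \<le> card ({..<m i i} - {idn i})"
    by (metis card_image card_lessThan card_cartesian_product card_mono finite_Diff finite_lessThan)
  also have "\<dots> < m i i" using idn[OF i] by simp
  finally show ?thesis .
qed

definition end_code :: "nat \<Rightarrow> nat \<Rightarrow> nat \<Rightarrow> nat" where
  "end_code b f g = 1 + f + b * g"

definition end_first :: "nat \<Rightarrow> nat \<Rightarrow> nat" where
  "end_first b h = (h - 1) mod b"

definition end_second :: "nat \<Rightarrow> nat \<Rightarrow> nat \<Rightarrow> nat" where
  "end_second b c h = (if h \<le> b * c then (h - 1) div b else 0)"

lemma end_code_le:
  assumes "f < b" "g < c"
  shows "end_code b f g \<le> b * c"
proof -
  have "f + b * g < b * Suc g" using assms(1) by simp
  also have "\<dots> \<le> b * c" using assms(2) by (intro mult_le_mono2) simp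
  finally show ?thesis by (simp add: end_code_def)
qed

lemma end_code_nonzero [simp]: "end_code b f g \<noteq> 0"
  by (simp add: end_code_def)

lemma end_first_code [simp]: "f < b \<Longrightarrow> end_first b (end_code b f g) = f"
  by (simp add: end_first_def end_code_def)

lemma end_second_code [simp]: "f < b \<Longrightarrow> g < c \<Longrightarrow> end_second b c (end_code b f g) = g"
  using end_code_le[of f b g c] by (simp add: end_second_def end_code_def)

lemma end_first_less: "0 < b \<Longrightarrow> end_first b h < b"
  by (simp add: end_first_def)

lemma end_second_less:
  assumes "0 < c"
  shows "end_second b c h < c"
proof (cases "h = 0 \<or> b * c < h")
  case False
  then have "h - 1 < b * c" by linarith
  then have "h - 1 < c * b" by (simp add: mult.commute)
  then show ?thesis using assms by (simp add: end_second_def less_mult_imp_div_less)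
qed (use assms in \<open>auto simp: end_second_def\<close>)

text \<open>Objects \<open>0 = x\<close> and \<open>1 = y\<close>; morphism \<open>0\<close> is the identity in \<open>A(x,x)\<close> and \<open>A(y,y)\<close>.
  A non-identity endomorphism \<open>h\<close> of \<open>x\<close> stands for \<open>g \<circ> f\<close> with
  \<open>f = end_first b h : x \<rightarrow> y\<close> and \<open>g = end_second b c h : y \<rightarrow> x\<close>.\<close>

definition cat2_comp :: "nat \<Rightarrow> nat \<Rightarrow> nat \<Rightarrow> nat \<Rightarrow> nat \<Rightarrow> nat \<Rightarrow> nat \<Rightarrow> nat" where
  "cat2_comp b c i j k g f =
    (if i = 0 \<and> j = 0 \<and> k = 0 then
       (if f = 0 then g else if g = 0 then f else end_code b (end_first b f) (end_second b c g))
     else if i = 0 \<and> j = 0 then (if f = 0 then g else end_first b f)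
     else if i = 0 \<and> k = 0 then end_code b f g
     else if i = 0 then f
     else if j = 0 \<and> k = 0 then (if g = 0 then f else end_second b c g)
     else if k = 0 then g
     else 0)"

lemma all_less_two: "(\<forall>i<2. P i) \<longleftrightarrow> P 0 \<and> P (1::nat)"
  by (auto simp: less_2_cases_iff)

lemma cat2_comp_in_Cat:
  assumes "0 < b" "0 < c" "b * c < a"
  shows "(cat2_comp b c, \<lambda>_. 0) \<in> Cat 2 (mat2 a b c 1)"
proof -
  let ?m = "mat2 a b c 1" and ?comp = "cat2_comp b c"
  have code_less: "end_code b f g < a" if "f < b" "g < c" for f g
    using end_code_le[OF that] assms(3) by simp
  note bounds = code_less end_first_less[OF assms(1)] end_second_less[OF assms(2)]
  have "\<forall>i<2. \<forall>j<2. \<forall>k<2. \<forall>f<?m i j. \<forall>g<?m j k. ?comp i j k g f < ?m i k"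
    using assms by (simp add: all_less_two mat2_def cat2_comp_def bounds)
  moreover have "\<forall>i<2. \<forall>j<2. \<forall>f<?m i j. ?comp i j j 0 f = f \<and> ?comp i i j f 0 = f"
    by (simp add: all_less_two mat2_def cat2_comp_def)
  moreover have "\<forall>i<2. \<forall>j<2. \<forall>k<2. \<forall>l<2. \<forall>f<?m i j. \<forall>g<?m j k. \<forall>h<?m k l.
      ?comp i k l h (?comp i j k g f) = ?comp i j l (?comp j k l h g) f"
  proof (intro allI impI)
    fix i j k l f g h
    assume "i < 2" "j < 2" "k < 2" "l < 2" "f < ?m i j" "g < ?m j k" "h < ?m k l"
    then show "?comp i k l h (?comp i j k g f) = ?comp i j l (?comp j k l h g) f"
      by (auto simp: less_2_cases_iff mat2_def cat2_comp_def bounds)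
  qed
  ultimately show ?thesis
    using assms by (simp add: Cat_def all_less_two mat2_def)
qed

theorem mainTheorem1:
  fixes a b c :: nat
  assumes "a > 1" and "b > 1" and "c > 1"
  shows "Cat 2 (mat2 a b c 1) \<noteq> {} \<longleftrightarrow> int a - int b * int c > 0"
proof -
  have "Cat 2 (mat2 a b c 1) \<noteq> {} \<longleftrightarrow> b * c < a"
  proof
    assume "Cat 2 (mat2 a b c 1) \<noteq> {}"
    then obtain cm idn where "(cm, idn) \<in> Cat 2 (mat2 a b c 1)" by auto
    from Cat_mult_hom_less_end[OF this, of 0 1] assms show "b * c < a"
      by (simp add: mat2_def)
  next
    assume "b * c < a"
    with cat2_comp_in_Cat[of b c a] assms show "Cat 2 (mat2 a b c 1) \<noteq> {}" by auto
  qed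
  also have "\<dots> \<longleftrightarrow> int a - int b * int c > 0"
    by (simp flip: of_nat_mult)
  finally show ?thesis .
qed

end
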